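(* For every $n\in\mathbb N$, the exponential vector space $\mathscr D^n[0,\infty)$ has a basis and $\dim\mathscr D^n[0,\infty)=[1:0]$.
   Context: An exponential vector space (evs) over a field $K$ is a partially ordered set $(X,\leq)$ with a binary operation $+$ on $X$ and a map $K\times X\to X$, $(\alpha,x)\mapsto \alpha x$, such that: (A1) $(X,+)$ is a commutative semigroup with identity $\theta$; (A2) $x\leq y$ implies $x+z\leq y+z$ and $\alpha x\leq \alpha y$ for all $z\in X$, $\alpha\in K$; (A3) $\alpha(x+y)=\alpha x+\alpha y$, $\alpha(\beta x)=(\alpha\beta)x$, $(\alpha+\beta)x\leq \alpha x+\beta x$, $1x=x$; (A4) $\alpha x=\theta$ iff $\alpha=0$ or $x=\theta$; (A5) $x+(-1)x=\theta$ iff $x\in X_0$, where $X_0:=\{z\in X: y\not\leq z \text{ for all } y\in X\smallsetminus\{z\}\}$ (the set of minimal elements, a vector space over $K$); (A6) for each $x\in X$ there is $p\in X_0$ with $p\leq x$. $\mathscr D^n[0,\infty)$ is the set $[0,\infty)^n$ over the field $\mathbb C$ with componentwise addition, scalar multiplication $\alpha\cdot(x_1,\dots,x_n)=(|\alpha|x_1,\dots,|\alpha|x_n)$, and the lexicographic (dictionary) order: $x\leq y$ iff $x=y$ or $x_i<y_i$ at the first index $i$ where $x_i\neq y_i$; its primitive space is $\{(0,\dots,0)\}$. For $x\in X\smallsetminus X_0$ let $L(x):=\{z\in X: z\geq \alpha x+p \text{ for some } \alpha\in K\smallsetminus\{0\},\ p\in X_0\}$. A subset $B\subseteq X\smallsetminus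 X_0$ generates $X\smallsetminus X_0$ if $X\smallsetminus X_0=\bigcup_{b\in B}L(b)$. Elements $x,y\in X\smallsetminus X_0$ are orderly dependent if $x\in L(y)$ or $y\in L(x)$, and orderly independent otherwise; $B$ is orderly independent if any two distinct members are orderly independent. A basis of $X\smallsetminus X_0$ is an orderly independent generating subset. All bases have the same cardinality $\dim(X\smallsetminus X_0)$; $\dim X_0$ is the vector-space dimension of $X_0$ ($0$ if $X_0=\{\theta\}$), and $\dim X:=[\dim(X\smallsetminus X_0):\dim X_0]$. *)

theory Defs
  imports Complex_Main
begin

definition prim :: "'a set \<Rightarrow> ('a \<Rightarrow> 'a \<Rightarrow> bool) \<Rightarrow> 'a set" where
  "prim X le = {z \<in> X. \<forall>y \<in> X - {z}. \<not> le y z}"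

definition Lset :: "'a set \<Rightarrow> ('a \<Rightarrow> 'a \<Rightarrow> bool) \<Rightarrow> ('a \<Rightarrow> 'a \<Rightarrow> 'a)
    \<Rightarrow> ('k::field \<Rightarrow> 'a \<Rightarrow> 'a) \<Rightarrow> 'a \<Rightarrow> 'a set" where
  "Lset X le add smul x =
     {z \<in> X. \<exists>\<alpha>. \<alpha> \<noteq> 0 \<and> (\<exists>p \<in> prim X le. le (add (smul \<alpha> x) p) z)}"

definition generates :: "'a set \<Rightarrow> ('a \<Rightarrow> 'a \<Rightarrow> bool) \<Rightarrow> ('a \<Rightarrow> 'a \<Rightarrow> 'a)
    \<Rightarrow> ('k::field \<Rightarrow> 'a \<Rightarrow> 'a) \<Rightarrow> 'a set \<Rightarrow> bool" where
  "generates X le add smul B \<longleftrightarrow>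
     B \<subseteq> X - prim X le \<and> X - prim X le = (\<Union>b\<in>B. Lset X le add smul b)"

definition orderly_dependent :: "'a set \<Rightarrow> ('a \<Rightarrow> 'a \<Rightarrow> bool) \<Rightarrow> ('a \<Rightarrow> 'a \<Rightarrow> 'a)
    \<Rightarrow> ('k::field \<Rightarrow> 'a \<Rightarrow> 'a) \<Rightarrow> 'a \<Rightarrow> 'a \<Rightarrow> bool" where
  "orderly_dependent X le add smul x y \<longleftrightarrow>
     x \<in> Lset X le add smul y \<or> y \<in> Lset X le add smul x"

definition orderly_independent_set :: "'a set \<Rightarrow> ('a \<Rightarrow> 'a \<Rightarrow> bool) \<Rightarrow> ('a \<Rightarrow> 'a \<Rightarrow> 'a)
    \<Rightarrow> ('k::field \<Rightarrow> 'a \<Rightarrow> 'a) \<Rightarrow> 'a set \<Rightarrow> bool" where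
  "orderly_independent_set X le add smul B \<longleftrightarrow>
     (\<forall>x\<in>B. \<forall>y\<in>B. x \<noteq> y \<longrightarrow> \<not> orderly_dependent X le add smul x y)"

definition evs_basis :: "'a set \<Rightarrow> ('a \<Rightarrow> 'a \<Rightarrow> bool) \<Rightarrow> ('a \<Rightarrow> 'a \<Rightarrow> 'a)
    \<Rightarrow> ('k::field \<Rightarrow> 'a \<Rightarrow> 'a) \<Rightarrow> 'a set \<Rightarrow> bool" where
  "evs_basis X le add smul B \<longleftrightarrow>
     generates X le add smul B \<and> orderly_independent_set X le add smul B"

inductive_set lin_span :: "('a \<Rightarrow> 'a \<Rightarrow> 'a) \<Rightarrow> ('k::field \<Rightarrow> 'a \<Rightarrow> 'a) \<Rightarrow> 'a
    \<Rightarrow> 'a set \<Rightarrow> 'a set"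
  for add smul th S where
  zero: "th \<in> lin_span add smul th S"
| step: "s \<in> S \<Longrightarrow> v \<in> lin_span add smul th S \<Longrightarrow> add (smul \<alpha> s) v \<in> lin_span add smul th S"

definition lin_indep :: "('a \<Rightarrow> 'a \<Rightarrow> 'a) \<Rightarrow> ('k::field \<Rightarrow> 'a \<Rightarrow> 'a) \<Rightarrow> 'a \<Rightarrow> 'a set \<Rightarrow> bool" where
  "lin_indep add smul th S \<longleftrightarrow> (\<forall>s\<in>S. s \<notin> lin_span add smul th (S - {s}))"

definition dim_prim :: "'a set \<Rightarrow> ('a \<Rightarrow> 'a \<Rightarrow> bool) \<Rightarrow> ('a \<Rightarrow> 'a \<Rightarrow> 'a)
    \<Rightarrow> ('k::field \<Rightarrow> 'a \<Rightarrow> 'a) \<Rightarrow> 'a \<Rightarrow> nat" where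
  "dim_prim X le add smul th = card (SOME S. S \<subseteq> prim X le \<and> lin_indep add smul th S
      \<and> lin_span add smul th S = prim X le)"

text \<open>dim X = [dim(X \ X0) : dim X0]; dim(X \ X0) is the cardinality of a basis
  (well defined since all bases have the same cardinality).\<close>
definition evs_dim :: "'a set \<Rightarrow> ('a \<Rightarrow> 'a \<Rightarrow> bool) \<Rightarrow> ('a \<Rightarrow> 'a \<Rightarrow> 'a)
    \<Rightarrow> ('k::field \<Rightarrow> 'a \<Rightarrow> 'a) \<Rightarrow> 'a \<Rightarrow> nat \<times> nat" where
  "evs_dim X le add smul th =
     (card (SOME B. evs_basis X le add smul B), dim_prim X le add smul th)"

definition Dn :: "nat \<Rightarrow> (nat \<Rightarrow> real) set" where
  "Dn n = {x. (\<forall>i<n. 0 \<le> x i) \<and> (\<forall>i\<ge>n. x i = 0)}"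

definition Dn_le :: "nat \<Rightarrow> (nat \<Rightarrow> real) \<Rightarrow> (nat \<Rightarrow> real) \<Rightarrow> bool" where
  "Dn_le n x y \<longleftrightarrow> x = y \<or> (\<exists>i<n. (\<forall>j<i. x j = y j) \<and> x i < y i)"

definition Dn_add :: "(nat \<Rightarrow> real) \<Rightarrow> (nat \<Rightarrow> real) \<Rightarrow> (nat \<Rightarrow> real)" where
  "Dn_add x y = (\<lambda>i. x i + y i)"

definition Dn_smul :: "complex \<Rightarrow> (nat \<Rightarrow> real) \<Rightarrow> (nat \<Rightarrow> real)" where
  "Dn_smul \<alpha> x = (\<lambda>i. cmod \<alpha> * x i)"

definition Dn_zero :: "nat \<Rightarrow> real" where
  "Dn_zero = (\<lambda>i. 0)"

end

theory Submission
  imports Defs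
begin

text \<open>The primitive space of \<open>\<D>\<^sup>n[0,\<infinity>)\<close> is \<open>{0}\<close>, of dimension 0 because
  \<open>{0}\<close> is not linearly independent (0 is the empty combination). A nonzero \<open>x\<close> has a
  leading index, its first nonzero coordinate. If the leading index of \<open>x\<close> is at most
  that of \<open>y\<close>, then a small positive multiple of \<open>y\<close> lies lexicographically below \<open>x\<close>,
  so \<open>x \<in> L(y)\<close>. Hence any two nonzero elements are orderly dependent, every basis is a
  singleton, and the last unit vector, whose leading index is maximal, generates
  everything on its own.\<close>

lemma lin_span_empty: "lin_span add smul th {} = {th}"
proof -
  have "v \<in> lin_span add smul th {} \<Longrightarrow> v = th" for v
    by (induction rule: lin_span.induct) auto
  then show ?thesis
    using lin_span.zero[of th add smul "{}"] by blast
qed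

lemma dim_prim_eq_0_if_prim_singleton:
  fixes smul :: "'k::field \<Rightarrow> 'a \<Rightarrow> 'a"
  assumes "prim X le = {th}"
  shows "dim_prim X le add smul th = 0"
proof -
  let ?is_basis = "\<lambda>S. S \<subseteq> prim X le \<and> lin_indep add smul th S
      \<and> lin_span add smul th S = prim X le"
  have "?is_basis {}"
    using assms by (simp add: lin_indep_def lin_span_empty)
  then have chosen: "?is_basis (SOME S. ?is_basis S)"
    by (rule someI)
  have "\<not> lin_indep add smul th {th}"
    by (simp add: lin_indep_def lin_span_empty)
  with chosen assms have "(SOME S. ?is_basis S) = {}"
    by (metis subset_singleton_iff)
  then show ?thesis
    by (simp add: dim_prim_def)
qed

lemma evs_basis_singleton:
  assumes "b \<in> X - prim X le" and "Lset X le add smul b = X - prim X le"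
  shows "evs_basis X le add smul {b}"
  using assms by (simp add: evs_basis_def generates_def orderly_independent_set_def)

lemma card_evs_basis_eq_1_if_dependent:
  assumes dependent: "\<And>x y. x \<in> X - prim X le \<Longrightarrow> y \<in> X - prim X le
      \<Longrightarrow> orderly_dependent X le add smul x y"
    and nonprim: "X - prim X le \<noteq> {}"
    and basis: "evs_basis X le add smul B"
  shows "card B = 1"
proof -
  have sub: "B \<subseteq> X - prim X le" and cover: "X - prim X le = (\<Union>b\<in>B. Lset X le add smul b)"
    and indep: "orderly_independent_set X le add smul B"
    using basis by (auto simp: evs_basis_def generates_def)
  obtain b where "b \<in> B"
    using cover nonprim by auto
  moreover have "x = b" if "x \<in> B" for x
    using that \<open>b \<in> B\<close> sub indep dependent
    unfolding orderly_independent_set_def by blast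
  ultimately have "B = {b}"
    by blast
  then show ?thesis
    by simp
qed

definition Dn_lead :: "(nat \<Rightarrow> real) \<Rightarrow> nat" where
  "Dn_lead x = (LEAST i. x i \<noteq> 0)"

definition Dn_last_unit :: "nat \<Rightarrow> nat \<Rightarrow> real" where
  "Dn_last_unit n = (\<lambda>i. if i = n - 1 then 1 else 0)"

lemma Dn_leadD:
  assumes "x \<in> Dn n" and "x \<noteq> Dn_zero"
  shows "Dn_lead x < n" and "0 < x (Dn_lead x)" and "\<And>k. k < Dn_lead x \<Longrightarrow> x k = 0"
proof -
  have "\<exists>i. x i \<noteq> 0"
    using assms(2) by (auto simp: Dn_zero_def)
  then have nonzero: "x (Dn_lead x) \<noteq> 0"
    unfolding Dn_lead_def by (rule LeastI_ex)
  moreover have "\<forall>i\<ge>n. x i = 0" and nonneg: "\<forall>i<n. 0 \<le> x i"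
    using assms(1) by (simp_all add: Dn_def)
  ultimately show "Dn_lead x < n"
    using not_less by blast
  with nonzero nonneg show "0 < x (Dn_lead x)"
    by (simp add: order_less_le)
  show "x k = 0" if "k < Dn_lead x" for k
    using that not_less_Least unfolding Dn_lead_def by blast
qed

lemma Dn_zero_le:
  assumes "z \<in> Dn n"
  shows "Dn_le n Dn_zero z"
proof (cases "z = Dn_zero")
  case False
  then show ?thesis
    using Dn_leadD[OF assms False] unfolding Dn_le_def Dn_zero_def by auto
qed (simp add: Dn_le_def)

lemma Dn_le_zero_iff:
  assumes "y \<in> Dn n"
  shows "Dn_le n y Dn_zero \<longleftrightarrow> y = Dn_zero"
proof -
  have "\<not> y i < 0" if "i < n" for i
    using assms that by (simp add: Dn_def not_less)
  then show ?thesis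
    by (auto simp: Dn_le_def Dn_zero_def)
qed

lemma prim_Dn: "prim (Dn n) (Dn_le n) = {Dn_zero}"
proof -
  have zero: "Dn_zero \<in> Dn n"
    by (simp add: Dn_def Dn_zero_def)
  have "z = Dn_zero" if "z \<in> prim (Dn n) (Dn_le n)" for z
    using that zero Dn_zero_le unfolding prim_def by blast
  moreover have "Dn_zero \<in> prim (Dn n) (Dn_le n)"
    using zero Dn_le_zero_iff unfolding prim_def by blast
  ultimately show ?thesis
    by blast
qed

lemma Dn_in_Lset_if_lead_le:
  assumes x: "x \<in> Dn n" "x \<noteq> Dn_zero" and y: "y \<in> Dn n" "y \<noteq> Dn_zero"
    and lead_le: "Dn_lead x \<le> Dn_lead y"
  shows "x \<in> Lset (Dn n) (Dn_le n) Dn_add Dn_smul y"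
proof -
  let ?i = "Dn_lead x"
  note lead_x = Dn_leadD[OF x] and lead_y = Dn_leadD[OF y]
  define c where "c = x ?i / (2 * y (Dn_lead y))"
    \<comment> \<open>the factor 2 keeps \<open>c * y ?i < x ?i\<close> strict when both leading indices coincide\<close>
  have "c > 0"
    using lead_x(2) lead_y(2) by (simp add: c_def)
  have below: "c * y k = x k" if "k < ?i" for k
    using that lead_le lead_x(3) lead_y(3) by simp
  have "c * y ?i < x ?i"
  proof (cases "?i = Dn_lead y")
    case True
    then show ?thesis
      using lead_x(2) lead_y(2) by (simp add: c_def)
  next
    case False
    then show ?thesis
      using lead_le lead_x(2) lead_y(3) by simp
  qed
  with below lead_x(1) \<open>c > 0\<close>
  have "Dn_le n (Dn_add (Dn_smul (complex_of_real c) y) Dn_zero) x"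
    unfolding Dn_le_def Dn_add_def Dn_smul_def Dn_zero_def by auto
  with x \<open>c > 0\<close> show ?thesis
    unfolding Lset_def prim_Dn by (intro CollectI conjI exI[of _ "complex_of_real c"]) auto
qed

lemma Dn_orderly_dependent:
  assumes "x \<in> Dn n" "x \<noteq> Dn_zero" "y \<in> Dn n" "y \<noteq> Dn_zero"
  shows "orderly_dependent (Dn n) (Dn_le n) Dn_add Dn_smul x y"
  using Dn_in_Lset_if_lead_le[OF assms] Dn_in_Lset_if_lead_le[OF assms(3,4,1,2)]
  unfolding orderly_dependent_def by linarith

lemma Dn_zero_notin_Lset:
  assumes "b \<in> Dn n" "b \<noteq> Dn_zero"
  shows "Dn_zero \<notin> Lset (Dn n) (Dn_le n) Dn_add Dn_smul b"
proof
  assume "Dn_zero \<in> Lset (Dn n) (Dn_le n) Dn_add Dn_smul b"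
  then obtain \<alpha> :: complex where "\<alpha> \<noteq> 0" and "Dn_le n (Dn_smul \<alpha> b) Dn_zero"
    unfolding Lset_def prim_Dn by (auto simp: Dn_add_def Dn_zero_def)
  moreover have "Dn_smul \<alpha> b \<in> Dn n"
    using assms(1) by (simp add: Dn_def Dn_smul_def)
  ultimately have "Dn_smul \<alpha> b = Dn_zero"
    using Dn_le_zero_iff by blast
  then have "cmod \<alpha> * b i = 0" for i
    by (metis Dn_smul_def Dn_zero_def)
  with \<open>\<alpha> \<noteq> 0\<close> assms(2) show False
    by (simp add: Dn_zero_def fun_eq_iff)
qed

lemma Dn_last_unit_nonzero:
  assumes "n \<ge> 1"
  shows "Dn_last_unit n \<in> Dn n" and "Dn_last_unit n \<noteq> Dn_zero"
  using assms by (auto simp: Dn_last_unit_def Dn_def Dn_zero_def fun_eq_iff)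

lemma Lset_Dn_last_unit:
  assumes "n \<ge> 1"
  shows "Lset (Dn n) (Dn_le n) Dn_add Dn_smul (Dn_last_unit n) = Dn n - {Dn_zero}"
proof -
  note e = Dn_last_unit_nonzero[OF assms]
  have "Dn_lead (Dn_last_unit n) = n - 1"
    unfolding Dn_lead_def Dn_last_unit_def by (rule Least_equality) (auto split: if_splits)
  moreover have "Dn_lead x \<le> n - 1" if "x \<in> Dn n" "x \<noteq> Dn_zero" for x
    using Dn_leadD(1)[OF that] by linarith
  ultimately have "Dn n - {Dn_zero} \<subseteq> Lset (Dn n) (Dn_le n) Dn_add Dn_smul (Dn_last_unit n)"
    using Dn_in_Lset_if_lead_le[OF _ _ e] by auto
  with Dn_zero_notin_Lset[OF e] show ?thesis
    by (auto simp: Lset_def)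
qed

theorem mainTheorem13:
  fixes n :: nat
  assumes "n \<ge> 1"
  shows "(\<exists>B. evs_basis (Dn n) (Dn_le n) Dn_add Dn_smul B)
       \<and> evs_dim (Dn n) (Dn_le n) Dn_add Dn_smul Dn_zero = (1, 0)"
proof
  have "Dn_last_unit n \<in> Dn n - {Dn_zero}"
    using Dn_last_unit_nonzero[OF assms] by blast
  then show ex: "\<exists>B. evs_basis (Dn n) (Dn_le n) Dn_add Dn_smul B"
    using evs_basis_singleton Lset_Dn_last_unit[OF assms] prim_Dn by metis
  have "card (SOME B. evs_basis (Dn n) (Dn_le n) Dn_add Dn_smul B) = 1"
    using card_evs_basis_eq_1_if_dependent[OF _ _ someI_ex[OF ex]] Dn_orderly_dependent
      \<open>Dn_last_unit n \<in> Dn n - {Dn_zero}\<close> by (force simp: prim_Dn)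
  then show "evs_dim (Dn n) (Dn_le n) Dn_add Dn_smul Dn_zero = (1, 0)"
    by (simp add: evs_dim_def dim_prim_eq_0_if_prim_singleton[OF prim_Dn])
qed

end
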